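(* Let $c,d\ge 2$, let $\overline{Z}=\mathbb{C}^{N}$, $N=\binom{c+d}{2}$, be the Plücker coordinate space $\bigwedge^2(V\oplus W)$ with coordinates $T_{ij}$, $1\le i<j\le c+d$ (indices $1,\dots,c$ corresponding to $V$, $c+1,\dots,c+d$ to $W$), and let $\overline{X}\subseteq\overline{Z}$ be the affine cone over the Grassmannian $G(2,V\oplus W)$, defined by the Plücker relations $T_{ij}T_{kl}-T_{ik}T_{jl}+T_{il}T_{jk}$, $1\le i<j<k<l\le c+d$. Let the torus $\mathbb{T}^2=(\mathbb{C}^* )^2$ act diagonally on $\overline{Z}$, where $T_{ij}$ has weight $(1,1)$ if $i,j\le c$, weight $(1,0)$ if $i\le c<j$, and weight $(1,-1)$ if $c+1\le i,j$. Then the $\mathbb{T}^2$-actions on $\overline{Z}$ and on $\overline{X}$ have the same GIT-fan $\Lambda$, and the maximal cones of $\Lambda$ are $\lambda_1=\operatorname{cone}((1,1),(1,0))$ and $\lambda_2=\operatorname{cone}((1,0),(1,-1))$.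
   Context: For a torus $T$ acting on an affine variety $\overline{Y}$, for $y\in\overline{Y}$ let $\omega_y\subseteq\mathbb{X}_{\mathbb{Q}}(T)$ be the cone generated by the degrees of homogeneous $f\in\mathcal{O}(\overline{Y})$ with $f(y)\ne0$. For $w\in\mathbb{X}_{\mathbb{Q}}(T)$ the GIT-chamber is $\lambda(w)=\bigcap_{y\in\overline{Y},\,w\in\omega_y}\omega_y$, and the GIT-fan is the collection of all GIT-chambers $\lambda(w)$ (in the cone of weights $w$ for which the intersection is over a nonempty set). *)

theory Defs
  imports Complex_Main
begin

inductive_set polyfun :: "(('v \<Rightarrow> complex) \<Rightarrow> complex) set" where
  pf_const: "(\<lambda>z. a) \<in> polyfun"
| pf_coord: "(\<lambda>z. z p) \<in> polyfun"
| pf_add: "f \<in> polyfun \<Longrightarrow> g \<in> polyfun \<Longrightarrow> (\<lambda>z. f z + g z) \<in> polyfun"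
| pf_mult: "f \<in> polyfun \<Longrightarrow> g \<in> polyfun \<Longrightarrow> (\<lambda>z. f z * g z) \<in> polyfun"

definition torus_act :: "('v \<Rightarrow> int \<times> int) \<Rightarrow> complex \<Rightarrow> complex \<Rightarrow> ('v \<Rightarrow> complex) \<Rightarrow> ('v \<Rightarrow> complex)" where
  "torus_act wt t1 t2 z = (\<lambda>p. t1 powi fst (wt p) * t2 powi snd (wt p) * z p)"

definition homogeneous_on :: "('v \<Rightarrow> int \<times> int) \<Rightarrow> ('v \<Rightarrow> complex) set \<Rightarrow> int \<times> int \<Rightarrow> (('v \<Rightarrow> complex) \<Rightarrow> complex) \<Rightarrow> bool" where
  "homogeneous_on wt Y w f \<longleftrightarrow> f \<in> polyfun \<and>
     (\<forall>t1 t2 y. t1 \<noteq> 0 \<longrightarrow> t2 \<noteq> 0 \<longrightarrow> y \<in> Y \<longrightarrow>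
        f (torus_act wt t1 t2 y) = t1 powi fst w * t2 powi snd w * f y)"

definition qcone :: "(rat \<times> rat) set \<Rightarrow> (rat \<times> rat) set" where
  "qcone S = {x. \<exists>F a. finite F \<and> F \<subseteq> S \<and> (\<forall>v\<in>F. a v \<ge> 0) \<and>
      x = ((\<Sum>v\<in>F. a v * fst v), (\<Sum>v\<in>F. a v * snd v))}"

definition rat_wt :: "int \<times> int \<Rightarrow> rat \<times> rat" where
  "rat_wt w = (of_int (fst w), of_int (snd w))"

definition orbit_cone :: "('v \<Rightarrow> int \<times> int) \<Rightarrow> ('v \<Rightarrow> complex) set \<Rightarrow> ('v \<Rightarrow> complex) \<Rightarrow> (rat \<times> rat) set" where
  "orbit_cone wt Y y = qcone {rat_wt w | w. \<exists>f. homogeneous_on wt Y w f \<and> f y \<noteq> 0}"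

definition git_chamber :: "('v \<Rightarrow> int \<times> int) \<Rightarrow> ('v \<Rightarrow> complex) set \<Rightarrow> rat \<times> rat \<Rightarrow> (rat \<times> rat) set" where
  "git_chamber wt Y w = \<Inter> {orbit_cone wt Y y | y. y \<in> Y \<and> w \<in> orbit_cone wt Y y}"

definition git_fan :: "('v \<Rightarrow> int \<times> int) \<Rightarrow> ('v \<Rightarrow> complex) set \<Rightarrow> (rat \<times> rat) set set" where
  "git_fan wt Y = {git_chamber wt Y w | w. \<exists>y\<in>Y. w \<in> orbit_cone wt Y y}"

definition pl_idx :: "nat \<Rightarrow> nat \<Rightarrow> (nat \<times> nat) set" where
  "pl_idx c d = {(i, j). 1 \<le> i \<and> i < j \<and> j \<le> c + d}"

definition Zbar :: "nat \<Rightarrow> nat \<Rightarrow> ((nat \<times> nat) \<Rightarrow> complex) set" where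
  "Zbar c d = {z. \<forall>p. p \<notin> pl_idx c d \<longrightarrow> z p = 0}"

definition Xbar :: "nat \<Rightarrow> nat \<Rightarrow> ((nat \<times> nat) \<Rightarrow> complex) set" where
  "Xbar c d = {z \<in> Zbar c d. \<forall>i j k l. 1 \<le> i \<and> i < j \<and> j < k \<and> k < l \<and> l \<le> c + d \<longrightarrow>
      z (i, j) * z (k, l) - z (i, k) * z (j, l) + z (i, l) * z (j, k) = 0}"

definition pl_wt :: "nat \<Rightarrow> nat \<times> nat \<Rightarrow> int \<times> int" where
  "pl_wt c p = (if snd p \<le> c then (1, 1) else if fst p \<le> c then (1, 0) else (1, -1))"

end

theory Submission
  imports Defs "HOL-Library.Indicator_Function"
begin

text \<open>All coordinate weights have first component 1, so a weight is determined by its slope,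
which lies in {-1, 0, 1}. The orbit cone of a point y is spanned by the weights of its
non-vanishing coordinates: if f is homogeneous of degree w with f(y) \<noteq> 0 and k is an integral
functional that is nonnegative on those weights, then along the one-parameter subgroup
s \<mapsto> (s^k1, s^k2) the point y has a limit as s \<rightarrow> 0 while f grows like s^\<langle>k,w\<rangle>, forcing
\<langle>k,w\<rangle> \<ge> 0. Hence every orbit cone is the cone between two slopes in [-1, 1], and points of
the Grassmann cone supported on one Pluecker coordinate, or on two coordinates sharing an index,
realise the origin, the three rays and the two cones between consecutive slopes. The
GIT-chamber of a weight of slope \<sigma> is then the cone between the slopes \<lfloor>\<sigma>\<rfloor> and \<lceil>\<sigma>\<rceil>, for the
Grassmann cone and for the whole Pluecker space alike.\<close>

lemma polyfun_isCont_scaled: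
  fixes m :: "'v \<Rightarrow> nat" and y :: "'v \<Rightarrow> complex"
  assumes "f \<in> polyfun"
  shows "isCont (\<lambda>s::real. f (\<lambda>p. complex_of_real s ^ m p * y p)) x"
  using assms by induction (auto intro!: continuous_intros)

lemma eq_zero_if_times_power_eq:
  fixes g :: "real \<Rightarrow> complex"
  assumes "isCont g 0" and "0 < N" and "\<And>s. 0 < s \<Longrightarrow> g s * complex_of_real s ^ N = a"
  shows "a = 0"
proof -
  have "((\<lambda>s. g s * complex_of_real s ^ N) \<longlongrightarrow> g 0 * complex_of_real 0 ^ N) (at_right 0)"
    using assms(1) by (intro tendsto_intros) (simp add: isCont_def filterlim_at_split)
  moreover have "eventually (\<lambda>s. g s * complex_of_real s ^ N = a) (at_right (0::real))"
    using eventually_at_right_less by (rule eventually_mono) (rule assms(3))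
  ultimately have "((\<lambda>s. a) \<longlongrightarrow> 0) (at_right (0::real))"
    using assms(2) by (simp add: tendsto_cong zero_power)
  then show ?thesis by (simp add: tendsto_const_iff)
qed

lemma homogeneous_degree_nonneg:
  assumes hom: "homogeneous_on wt Y w f" and fy: "f y \<noteq> 0" and y: "y \<in> Y"
    and supp: "\<And>p. y p \<noteq> 0 \<Longrightarrow> 0 \<le> k1 * fst (wt p) + k2 * snd (wt p)"
  shows "0 \<le> k1 * fst w + k2 * snd w"
proof (rule ccontr)
  assume neg: "\<not> ?thesis"
  \<comment> \<open>g is f along the one-parameter subgroup s \<mapsto> (s^k1, s^k2) applied to y\<close>
  define N where "N = nat (- (k1 * fst w + k2 * snd w))"
  define m where "m p = nat (k1 * fst (wt p) + k2 * snd (wt p))" for p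
  define g where "g s = f (\<lambda>p. complex_of_real s ^ m p * y p)" for s
  have "isCont g 0"
    using hom unfolding g_def homogeneous_on_def by (blast intro: polyfun_isCont_scaled)
  moreover have "g s * complex_of_real s ^ N = f y" if "0 < s" for s
  proof -
    let ?s = "complex_of_real s"
    have "?s \<noteq> 0" using that by simp
    then have factor: "(?s powi k1) powi e1 * (?s powi k2) powi e2 = ?s powi (k1 * e1 + k2 * e2)"
      for e1 e2 by (simp add: power_int_mult power_int_add)
    have act: "torus_act wt (?s powi k1) (?s powi k2) y = (\<lambda>p. ?s ^ m p * y p)"
    proof
      fix p
      show "torus_act wt (?s powi k1) (?s powi k2) y p = ?s ^ m p * y p"
        using supp[of p] factor
        by (cases "y p = 0") (auto simp: torus_act_def m_def simp flip: power_int_of_nat)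
    qed
    have "f (torus_act wt (?s powi k1) (?s powi k2) y) = (?s powi k1) powi fst w * (?s powi k2) powi snd w * f y"
      using hom y \<open>?s \<noteq> 0\<close> by (simp add: homogeneous_on_def)
    then have "g s = ?s powi (k1 * fst w + k2 * snd w) * f y"
      by (simp add: g_def act factor)
    also have "k1 * fst w + k2 * snd w = - int N"
      using neg by (simp add: N_def)
    finally show ?thesis
      using \<open>?s \<noteq> 0\<close> by (simp add: power_int_minus field_simps)
  qed
  ultimately have "f y = 0"
    using neg by (intro eq_zero_if_times_power_eq[of g N]) (auto simp: N_def)
  with fy show False by simp
qed

definition qcone_closed :: "(rat \<times> rat) set \<Rightarrow> bool" where
  "qcone_closed D \<longleftrightarrow> (0, 0) \<in> D \<and> (\<forall>u\<in>D. \<forall>v\<in>D. (fst u + fst v, snd u + snd v) \<in> D)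
     \<and> (\<forall>a u. 0 \<le> a \<longrightarrow> u \<in> D \<longrightarrow> (a * fst u, a * snd u) \<in> D)"

lemma qcone_least:
  assumes "S \<subseteq> D" and "qcone_closed D"
  shows "qcone S \<subseteq> D"
proof
  fix x assume "x \<in> qcone S"
  then obtain F a where F: "finite F" "F \<subseteq> S" "\<forall>v\<in>F. 0 \<le> a v"
    and x: "x = ((\<Sum>v\<in>F. a v * fst v), (\<Sum>v\<in>F. a v * snd v))"
    unfolding qcone_def by blast
  from F have "((\<Sum>v\<in>F. a v * fst v), (\<Sum>v\<in>F. a v * snd v)) \<in> D"
  proof (induction F rule: finite_induct)
    case empty
    then show ?case using assms(2) by (simp add: qcone_closed_def)
  next
    case (insert v F)
    then have "(a v * fst v, a v * snd v) \<in> D"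
      using assms by (auto simp: qcone_closed_def)
    moreover have "((\<Sum>v\<in>F. a v * fst v), (\<Sum>v\<in>F. a v * snd v)) \<in> D"
      using insert by simp
    ultimately show ?case
      using assms(2) insert.hyps unfolding qcone_closed_def by fastforce
  qed
  then show "x \<in> D" using x by simp
qed

lemma qcone_mono: "S \<subseteq> T \<Longrightarrow> qcone S \<subseteq> qcone T"
  unfolding qcone_def by blast

lemma zero_in_qcone: "(0, 0) \<in> qcone S"
  unfolding qcone_def by (auto intro!: exI[of _ "{}"])

lemma qcone_pair_combination:
  assumes "0 \<le> a" and "0 \<le> b"
  shows "(a * fst u + b * fst v, a * snd u + b * snd v) \<in> qcone {u, v}"
proof (cases "u = v")
  case True
  then show ?thesis
    using assms unfolding qcone_def
    by (auto intro!: exI[of _ "{u}"] exI[of _ "\<lambda>_. a + b"] simp: algebra_simps)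
next
  case False
  then show ?thesis
    using assms unfolding qcone_def
    by (auto intro!: exI[of _ "{u, v}"] exI[of _ "\<lambda>x. if x = u then a else b"])
qed

definition slope_cone :: "int \<Rightarrow> int \<Rightarrow> (rat \<times> rat) set" where
  "slope_cone lo hi = {(x, v). 0 \<le> x \<and> of_int lo * x \<le> v \<and> v \<le> of_int hi * x}"

lemma mem_slope_cone [simp]:
  "(x, v) \<in> slope_cone lo hi \<longleftrightarrow> 0 \<le> x \<and> of_int lo * x \<le> v \<and> v \<le> of_int hi * x"
  by (simp add: slope_cone_def)

lemma qcone_closed_slope_cone: "qcone_closed (slope_cone lo hi)"
proof -
  have scale: "c * (a * x) \<le> a * v" "a * v \<le> c' * (a * x)"
    if "0 \<le> a" "c * x \<le> v" "v \<le> c' * x" for a c c' x v :: rat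
    using mult_left_mono[OF that(2,1)] mult_left_mono[OF that(3,1)]
    by (simp_all add: mult.left_commute)
  show ?thesis
    unfolding qcone_closed_def slope_cone_def
    by (auto simp: distrib_left intro: add_mono scale)
qed

lemma qcone_closed_origin: "qcone_closed {(0, 0)}"
  by (simp add: qcone_closed_def)

lemma qcone_pair_eq_slope_cone:
  assumes "lo \<le> hi"
  shows "qcone {(1, of_int lo), (1, of_int hi)} = slope_cone lo hi"
proof
  show "qcone {(1, of_int lo), (1, of_int hi)} \<subseteq> slope_cone lo hi"
    using assms by (intro qcone_least qcone_closed_slope_cone) auto
next
  show "slope_cone lo hi \<subseteq> qcone {(1, of_int lo), (1, of_int hi)}"
  proof clarify
    fix x v :: rat
    assume "(x, v) \<in> slope_cone lo hi"
    then have x: "0 \<le> x" and lo: "of_int lo * x \<le> v" and hi: "v \<le> of_int hi * x" by auto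
    show "(x, v) \<in> qcone {(1, of_int lo), (1, of_int hi)}"
    proof (cases "lo = hi")
      case True
      then show ?thesis
        using qcone_pair_combination[OF x order_refl, of "(1, of_int lo)" "(1, of_int hi)"] lo hi
        by (simp add: mult.commute)
    next
      case False
      define d :: rat where "d = of_int hi - of_int lo"
      define a where "a = (of_int hi * x - v) / d"
      define b where "b = (v - of_int lo * x) / d"
      have "0 < d" using assms False by (simp add: d_def)
      then have "0 \<le> a" "0 \<le> b" "a + b = x" "a * of_int lo + b * of_int hi = v"
        using lo hi unfolding a_def b_def by (simp_all add: field_simps) (simp_all add: d_def algebra_simps)
      then show ?thesis
        using qcone_pair_combination[of a b "(1, of_int lo)" "(1, of_int hi)"] by simp
    qed
  qed
qed

lemma slope_cone_mono: "lo' \<le> lo \<Longrightarrow> hi \<le> hi' \<Longrightarrow> slope_cone lo hi \<subseteq> slope_cone lo' hi'"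
proof clarify
  fix x v :: rat
  assume "lo' \<le> lo" "hi \<le> hi'" "(x, v) \<in> slope_cone lo hi"
  then show "(x, v) \<in> slope_cone lo' hi'"
    using mult_right_mono[of "of_int lo'" "of_int lo" x] mult_right_mono[of "of_int hi" "of_int hi'" x]
    by auto
qed

lemma slope_cone_subset_iff:
  assumes "lo \<le> hi"
  shows "slope_cone lo hi \<subseteq> slope_cone lo' hi' \<longleftrightarrow> lo' \<le> lo \<and> hi \<le> hi'"
proof
  assume "slope_cone lo hi \<subseteq> slope_cone lo' hi'"
  moreover have "(1, of_int lo) \<in> slope_cone lo hi" "(1, of_int hi) \<in> slope_cone lo hi"
    using assms by auto
  ultimately have "(1, of_int lo) \<in> slope_cone lo' hi'" "(1, of_int hi) \<in> slope_cone lo' hi'"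
    by blast+
  then show "lo' \<le> lo \<and> hi \<le> hi'" by simp
qed (rule slope_cone_mono; simp)

lemma mem_slope_cone_pos:
  assumes "0 < x"
  shows "(x, v) \<in> slope_cone lo hi \<longleftrightarrow> lo \<le> \<lfloor>v / x\<rfloor> \<and> \<lceil>v / x\<rceil> \<le> hi"
  using assms by (simp add: le_floor_iff ceiling_le_iff pos_le_divide_eq pos_divide_le_eq mult.commute)

lemma coordinate_homogeneous: "homogeneous_on wt Y (wt p) (\<lambda>z. z p)"
  by (simp add: homogeneous_on_def torus_act_def polyfun.pf_coord)

lemma qcone_support_weights_subset_orbit_cone:
  "qcone {rat_wt (wt p) | p. y p \<noteq> 0} \<subseteq> orbit_cone wt Y y"
  unfolding orbit_cone_def
proof (rule qcone_mono, rule subsetI)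
  fix u assume "u \<in> {rat_wt (wt p) | p. y p \<noteq> 0}"
  then obtain p where "u = rat_wt (wt p)" "y p \<noteq> 0" by blast
  then show "u \<in> {rat_wt w | w. \<exists>f. homogeneous_on wt Y w f \<and> f y \<noteq> 0}"
    using coordinate_homogeneous[of wt Y p] by blast
qed

lemma orbit_cone_subsetI:
  assumes "\<And>w f. homogeneous_on wt Y w f \<Longrightarrow> f y \<noteq> 0 \<Longrightarrow> rat_wt w \<in> D" and "qcone_closed D"
  shows "orbit_cone wt Y y \<subseteq> D"
  unfolding orbit_cone_def using assms by (intro qcone_least) auto

lemma orbit_cone_of_zero:
  assumes "y \<in> Y" and "\<And>p. y p = 0"
  shows "orbit_cone wt Y y = {(0, 0)}"
proof
  show "orbit_cone wt Y y \<subseteq> {(0, 0)}"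
  proof (rule orbit_cone_subsetI[OF _ qcone_closed_origin])
    fix w f assume "homogeneous_on wt Y w f" "f y \<noteq> 0"
    then have "0 \<le> k1 * fst w + k2 * snd w" for k1 k2
      using homogeneous_degree_nonneg assms by blast
    from this[of 1 0] this[of "-1" 0] this[of 0 1] this[of 0 "-1"]
    show "rat_wt w \<in> {(0, 0)}" by (simp add: rat_wt_def)
  qed
qed (simp add: orbit_cone_def zero_in_qcone)

lemma orbit_cone_eq_slope_cone:
  assumes y: "y \<in> Y" and "\<exists>p. y p \<noteq> 0" and wt1: "\<And>p. fst (wt p) = 1"
    and fin: "finite {snd (wt p) | p. y p \<noteq> 0}"
  shows "orbit_cone wt Y y
    = slope_cone (Min {snd (wt p) | p. y p \<noteq> 0}) (Max {snd (wt p) | p. y p \<noteq> 0})"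
    (is "_ = slope_cone ?lo ?hi")
proof
  have ne: "{snd (wt p) | p. y p \<noteq> 0} \<noteq> {}" using assms(2) by blast
  show "orbit_cone wt Y y \<subseteq> slope_cone ?lo ?hi"
  proof (rule orbit_cone_subsetI[OF _ qcone_closed_slope_cone])
    fix w f assume hom: "homogeneous_on wt Y w f" and fy: "f y \<noteq> 0"
    have K: "0 \<le> k1 * fst w + k2 * snd w"
      if "\<And>p. y p \<noteq> 0 \<Longrightarrow> 0 \<le> k1 + k2 * snd (wt p)" for k1 k2
      using hom fy y by (rule homogeneous_degree_nonneg) (simp add: wt1 that)
    have bounds: "?lo \<le> snd (wt p)" "snd (wt p) \<le> ?hi" if "y p \<noteq> 0" for p
      using fin that by (auto intro: Min_le Max_ge)
    have "0 \<le> fst w" using K[of 1 0] by simp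
    moreover have "?lo * fst w \<le> snd w" using K[of "- ?lo" 1] bounds by fastforce
    moreover have "snd w \<le> ?hi * fst w" using K[of ?hi "- 1"] bounds by fastforce
    ultimately show "rat_wt w \<in> slope_cone ?lo ?hi"
      by (simp add: rat_wt_def flip: of_int_mult)
  qed
  have "rat_wt (wt p) = (1, of_int (snd (wt p)))" for p
    by (simp add: rat_wt_def wt1)
  then have "{(1, of_int ?lo), (1, of_int ?hi)} \<subseteq> {rat_wt (wt p) | p. y p \<noteq> 0}"
    using Min_in[OF fin ne] Max_in[OF fin ne] by auto
  then have "qcone {(1, of_int ?lo), (1, of_int ?hi)} \<subseteq> orbit_cone wt Y y"
    by (rule order_trans[OF qcone_mono qcone_support_weights_subset_orbit_cone])
  then show "slope_cone ?lo ?hi \<subseteq> orbit_cone wt Y y"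
    using qcone_pair_eq_slope_cone[OF Max_ge[OF fin Min_in[OF fin ne]]] by simp
qed

lemma git_fan_eq_chambers:
  "git_fan wt Y = {\<Inter>{C \<in> orbit_cone wt Y ` Y. w \<in> C} | w. \<exists>C \<in> orbit_cone wt Y ` Y. w \<in> C}"
proof -
  have "{orbit_cone wt Y y | y. y \<in> Y \<and> w \<in> orbit_cone wt Y y} = {C \<in> orbit_cone wt Y ` Y. w \<in> C}"
    for w by auto
  then show ?thesis
    unfolding git_fan_def git_chamber_def by auto
qed

definition slope_cones :: "int \<Rightarrow> int \<Rightarrow> (rat \<times> rat) set set" where
  "slope_cones m M = insert {(0, 0)} {slope_cone lo hi | lo hi. m \<le> lo \<and> hi \<le> M}"

definition slope_fan :: "int \<Rightarrow> int \<Rightarrow> (rat \<times> rat) set set" where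
  "slope_fan m M = insert {(0, 0)} {slope_cone lo hi | lo hi. m \<le> lo \<and> lo \<le> hi \<and> hi \<le> lo + 1 \<and> hi \<le> M}"

context
  fixes m M :: int and F :: "(rat \<times> rat) set set"
  assumes fan_subset: "slope_fan m M \<subseteq> F" and subset_cones: "F \<subseteq> slope_cones m M"
begin

lemma unit_slope_cone_in_family:
  assumes "m \<le> lo" "lo \<le> hi" "hi \<le> lo + 1" "hi \<le> M"
  shows "slope_cone lo hi \<in> F"
proof -
  have "slope_cone lo hi \<in> slope_fan m M" using assms unfolding slope_fan_def by blast
  then show ?thesis using fan_subset by blast
qed

lemma slope_bounds_in_family:
  assumes "w \<in> C" "C \<in> F" "w \<noteq> (0, 0)"
  shows "0 < fst w \<and> m \<le> \<lfloor>snd w / fst w\<rfloor> \<and> \<lceil>snd w / fst w\<rceil> \<le> M"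
proof -
  obtain x v where w: "w = (x, v)" by fastforce
  obtain lo hi where "m \<le> lo" "hi \<le> M" and C: "C = slope_cone lo hi"
    using assms subset_cones by (auto simp: slope_cones_def)
  have "(x, v) \<in> slope_cone lo hi" using assms(1) w C by simp
  moreover from this have "0 < x"
    using assms(3) w by (auto intro: antisym)
  ultimately have "lo \<le> \<lfloor>v / x\<rfloor>" "\<lceil>v / x\<rceil> \<le> hi"
    using mem_slope_cone_pos by blast+
  then show ?thesis
    using \<open>0 < x\<close> \<open>m \<le> lo\<close> \<open>hi \<le> M\<close> by (simp add: w)
qed

lemma chamber_in_slope_family:
  assumes "w \<in> C0" "C0 \<in> F" "w \<noteq> (0, 0)"
  shows "\<Inter>{C \<in> F. w \<in> C} = slope_cone \<lfloor>snd w / fst w\<rfloor> \<lceil>snd w / fst w\<rceil>"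
    (is "_ = slope_cone ?lo ?hi")
proof
  have pos: "0 < fst w" and "m \<le> ?lo" "?hi \<le> M"
    using slope_bounds_in_family[OF assms] by auto
  moreover have "?lo \<le> ?hi" "?hi \<le> ?lo + 1"
    using ceiling_diff_floor_le_1[of "snd w / fst w"] by auto
  ultimately have "slope_cone ?lo ?hi \<in> F"
    by (intro unit_slope_cone_in_family)
  moreover have "w \<in> slope_cone ?lo ?hi"
    using pos mem_slope_cone_pos[of "fst w" "snd w"] by simp
  ultimately show "\<Inter>{C \<in> F. w \<in> C} \<subseteq> slope_cone ?lo ?hi" by blast
next
  show "slope_cone ?lo ?hi \<subseteq> \<Inter>{C \<in> F. w \<in> C}"
  proof (rule Inter_greatest)
    fix C assume "C \<in> {C \<in> F. w \<in> C}"
    then have "C \<in> F" "w \<in> C" by auto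
    then obtain lo hi where C: "C = slope_cone lo hi"
      using assms(3) subset_cones by (auto simp: slope_cones_def)
    have "0 < fst w" using slope_bounds_in_family[OF assms] by simp
    then have "lo \<le> ?lo" "?hi \<le> hi"
      using \<open>w \<in> C\<close> mem_slope_cone_pos[of "fst w" "snd w"] by (auto simp: C)
    then show "slope_cone ?lo ?hi \<subseteq> C" unfolding C by (rule slope_cone_mono)
  qed
qed

lemma chamber_of_origin: "\<Inter>{C \<in> F. (0, 0) \<in> C} = {(0, 0)}"
proof -
  have "{(0, 0)} \<in> F" using fan_subset by (simp add: slope_fan_def)
  moreover have "(0, 0) \<in> C" if "C \<in> F" for C
    using that subset_cones by (auto simp: slope_cones_def)
  ultimately show ?thesis by blast
qed

lemma chambers_of_slope_family:
  "{\<Inter>{C \<in> F. w \<in> C} | w. \<exists>C \<in> F. w \<in> C} = slope_fan m M"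
proof (intro antisym subsetI)
  fix K assume "K \<in> {\<Inter>{C \<in> F. w \<in> C} | w. \<exists>C \<in> F. w \<in> C}"
  then obtain w C0 where K: "K = \<Inter>{C \<in> F. w \<in> C}" and "w \<in> C0" "C0 \<in> F" by blast
  show "K \<in> slope_fan m M"
  proof (cases "w = (0, 0)")
    case True
    then show ?thesis using K chamber_of_origin by (simp add: slope_fan_def)
  next
    case False
    let ?lo = "\<lfloor>snd w / fst w\<rfloor>" and ?hi = "\<lceil>snd w / fst w\<rceil>"
    have "m \<le> ?lo" "?hi \<le> M"
      using slope_bounds_in_family[OF \<open>w \<in> C0\<close> \<open>C0 \<in> F\<close> False] by auto
    moreover have "?lo \<le> ?hi" "?hi \<le> ?lo + 1"
      using ceiling_diff_floor_le_1[of "snd w / fst w"] by auto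
    ultimately show ?thesis
      using K chamber_in_slope_family[OF \<open>w \<in> C0\<close> \<open>C0 \<in> F\<close> False]
      by (auto simp: slope_fan_def)
  qed
next
  fix K assume "K \<in> slope_fan m M"
  then consider "K = {(0, 0)}"
    | lo hi where "m \<le> lo" "lo \<le> hi" "hi \<le> lo + 1" "hi \<le> M" "K = slope_cone lo hi"
    by (auto simp: slope_fan_def)
  then show "K \<in> {\<Inter>{C \<in> F. w \<in> C} | w. \<exists>C \<in> F. w \<in> C}"
  proof cases
    case 1
    moreover have "{(0, 0)} \<in> F" using fan_subset by (simp add: slope_fan_def)
    ultimately show ?thesis using chamber_of_origin by force
  next
    case 2
    define w :: "rat \<times> rat" where "w = (2, of_int (lo + hi))"
    have "K \<in> F" using 2 by (simp add: unit_slope_cone_in_family)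
    moreover have "w \<in> K" using 2 by (simp add: w_def)
    moreover have "\<lfloor>snd w / fst w\<rfloor> = lo" "\<lceil>snd w / fst w\<rceil> = hi"
      using 2 by (auto simp: w_def intro!: floor_unique ceiling_unique)
    ultimately have "K = \<Inter>{C \<in> F. w \<in> C}"
      using chamber_in_slope_family[of w K] by (simp add: w_def \<open>K = slope_cone lo hi\<close>)
    then show ?thesis using \<open>w \<in> K\<close> \<open>K \<in> F\<close> by blast
  qed
qed

end

lemma maximal_cones_slope_fan:
  assumes "m < M"
  shows "{C \<in> slope_fan m M. \<forall>D \<in> slope_fan m M. C \<subseteq> D \<longrightarrow> D = C}
    = {slope_cone lo (lo + 1) | lo. m \<le> lo \<and> lo + 1 \<le> M}"
proof -
  have not_sub_origin: "\<not> slope_cone lo hi \<subseteq> {(0, 0)}" if "lo \<le> hi" for lo hi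
  proof
    assume "slope_cone lo hi \<subseteq> {(0, 0)}"
    moreover have "(1, of_int lo) \<in> slope_cone lo hi" using that by simp
    ultimately have "(1, of_int lo) \<in> {(0 :: rat, 0 :: rat)}" by blast
    then show False by simp
  qed
  have unit_in: "slope_cone lo hi \<in> slope_fan m M"
    if "m \<le> lo" "lo \<le> hi" "hi \<le> lo + 1" "hi \<le> M" for lo hi
    using that unfolding slope_fan_def by blast
  show ?thesis
  proof (intro antisym subsetI)
    fix C assume "C \<in> {C \<in> slope_fan m M. \<forall>D \<in> slope_fan m M. C \<subseteq> D \<longrightarrow> D = C}"
    then have C: "C \<in> slope_fan m M" and max: "\<And>D. D \<in> slope_fan m M \<Longrightarrow> C \<subseteq> D \<Longrightarrow> D = C"
      by auto
    have "C \<noteq> {(0, 0)}"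
      using max[OF unit_in[of m "m + 1"]] assms not_sub_origin[of m "m + 1"] by auto
    then obtain lo hi where "m \<le> lo" "lo \<le> hi" "hi \<le> lo + 1" "hi \<le> M" and Cs: "C = slope_cone lo hi"
      using C by (auto simp: slope_fan_def)
    moreover have "hi \<noteq> lo"
    proof
      assume "hi = lo"
      define lo' where "lo' = (if lo + 1 \<le> M then lo else lo - 1)"
      have "m \<le> lo'" "lo' + 1 \<le> M" "lo' \<le> lo" "lo \<le> lo' + 1"
        using \<open>m \<le> lo\<close> \<open>hi \<le> M\<close> \<open>hi = lo\<close> assms by (auto simp: lo'_def)
      then have "slope_cone lo' (lo' + 1) = C"
        using max[OF unit_in[of lo' "lo' + 1"]] \<open>hi = lo\<close> Cs by (simp add: slope_cone_mono)
      then show False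
        using slope_cone_subset_iff[of lo' "lo' + 1" lo lo] Cs \<open>hi = lo\<close> by auto
    qed
    ultimately have "hi = lo + 1" by simp
    then show "C \<in> {slope_cone lo (lo + 1) | lo. m \<le> lo \<and> lo + 1 \<le> M}"
      using \<open>m \<le> lo\<close> \<open>hi \<le> M\<close> Cs by blast
  next
    fix C assume "C \<in> {slope_cone lo (lo + 1) | lo. m \<le> lo \<and> lo + 1 \<le> M}"
    then obtain lo where lo: "m \<le> lo" "lo + 1 \<le> M" and Cs: "C = slope_cone lo (lo + 1)" by blast
    have "D = C" if "D \<in> slope_fan m M" "C \<subseteq> D" for D
    proof -
      have "D \<noteq> {(0, 0)}" using that(2) not_sub_origin[of lo "lo + 1"] Cs by auto
      with that(1) obtain lo' hi' where "lo' \<le> hi'" "hi' \<le> lo' + 1" and Ds: "D = slope_cone lo' hi'"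
        unfolding slope_fan_def by blast
      then have "lo' = lo" "hi' = lo + 1"
        using that(2) slope_cone_subset_iff[of lo "lo + 1" lo' hi'] Cs by auto
      then show ?thesis using Cs Ds by simp
    qed
    then show "C \<in> {C \<in> slope_fan m M. \<forall>D \<in> slope_fan m M. C \<subseteq> D \<longrightarrow> D = C}"
      using unit_in[OF lo(1) _ _ lo(2)] Cs by auto
  qed
qed

lemma pl_wt_fst [simp]: "fst (pl_wt c p) = 1"
  by (simp add: pl_wt_def)

lemma pl_wt_snd: "snd (pl_wt c p) \<in> {-1, 0, 1}"
  by (simp add: pl_wt_def)

lemma orbit_cone_pl_wt:
  assumes "y \<in> Y"
  shows "orbit_cone (pl_wt c) Y y \<in> slope_cones (-1) 1"
proof (cases "\<forall>p. y p = 0")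
  case True
  then have "\<And>p. y p = 0" by blast
  then show ?thesis using orbit_cone_of_zero[OF assms] by (simp add: slope_cones_def)
next
  case False
  let ?S = "{snd (pl_wt c p) | p. y p \<noteq> 0}"
  have "?S \<subseteq> {-1, 0, 1}" using pl_wt_snd by blast
  then have fin: "finite ?S" by (rule finite_subset) simp
  have ne: "?S \<noteq> {}" using False by blast
  have "Min ?S \<in> {-1, 0, 1}" "Max ?S \<in> {-1, 0, 1}"
    using Min_in[OF fin ne] Max_in[OF fin ne] \<open>?S \<subseteq> {-1, 0, 1}\<close> by blast+
  then have "- 1 \<le> Min ?S" "Max ?S \<le> 1" by auto
  moreover have "orbit_cone (pl_wt c) Y y = slope_cone (Min ?S) (Max ?S)"
    using False fin by (intro orbit_cone_eq_slope_cone[OF assms]) auto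
  ultimately show ?thesis unfolding slope_cones_def by blast
qed

lemma indicator_in_Xbar:
  assumes "P \<subseteq> pl_idx c d"
    and meet: "\<And>p q. p \<in> P \<Longrightarrow> q \<in> P \<Longrightarrow> {fst p, snd p} \<inter> {fst q, snd q} \<noteq> {}"
  shows "indicator P \<in> Xbar c d"
proof -
  have vanish: "indicator P a * indicator P b = (0::complex)"
    if "{fst a, snd a} \<inter> {fst b, snd b} = {}" for a b
    using meet[of a b] that by (auto simp: indicator_def)
  have plucker: "indicator P (i, j) * indicator P (k, l) - indicator P (i, k) * indicator P (j, l)
      + indicator P (i, l) * indicator P (j, k) = (0::complex)"
    if "i < j" "j < k" "k < l" for i j k l
    using vanish[of "(i, j)" "(k, l)"] vanish[of "(i, k)" "(j, l)"] vanish[of "(i, l)" "(j, k)"] that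
    by auto
  have "indicator P \<in> Zbar c d"
    using assms(1) by (auto simp: Zbar_def indicator_def)
  with plucker show ?thesis by (auto simp: Xbar_def)
qed

definition slope_coordinate :: "nat \<Rightarrow> int \<Rightarrow> nat \<times> nat" where
  "slope_coordinate c s = (if s = 1 then (1, 2) else if s = 0 then (1, c + 1) else (c + 1, c + 2))"

lemma slope_coordinate:
  assumes "2 \<le> c" "2 \<le> d" "s \<in> {-1, 0, 1}"
  shows "slope_coordinate c s \<in> pl_idx c d" "snd (pl_wt c (slope_coordinate c s)) = s"
  using assms by (auto simp: slope_coordinate_def pl_idx_def pl_wt_def)

lemma slope_fan_subset_orbit_cones:
  assumes "2 \<le> c" "2 \<le> d" and XY: "Xbar c d \<subseteq> Y"
  shows "slope_fan (-1) 1 \<subseteq> orbit_cone (pl_wt c) Y ` Y"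
proof
  fix K assume "K \<in> slope_fan (-1) 1"
  then consider "K = {(0, 0)}"
    | lo hi where "-1 \<le> lo" "lo \<le> hi" "hi \<le> lo + 1" "hi \<le> 1" "K = slope_cone lo hi"
    by (auto simp: slope_fan_def)
  then show "K \<in> orbit_cone (pl_wt c) Y ` Y"
  proof cases
    case 1
    have "(\<lambda>_. 0) \<in> Xbar c d" by (simp add: Xbar_def Zbar_def)
    then have "(\<lambda>_. 0) \<in> Y" using XY by blast
    then show ?thesis using 1 orbit_cone_of_zero[of "\<lambda>_. 0" Y "pl_wt c"] by force
  next
    case 2
    let ?P = "slope_coordinate c ` {lo, hi}"
    have slopes: "lo \<in> {-1, 0, 1}" "hi \<in> {-1, 0, 1}" using 2 by auto
    have "indicator ?P \<in> Xbar c d"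
    proof (rule indicator_in_Xbar)
      show "?P \<subseteq> pl_idx c d" using slope_coordinate(1)[OF assms(1,2)] slopes by auto
      show "{fst p, snd p} \<inter> {fst q, snd q} \<noteq> {}" if "p \<in> ?P" "q \<in> ?P" for p q
        using that 2 by (auto simp: slope_coordinate_def)
    qed
    then have Y: "indicator ?P \<in> Y" using XY by blast
    have support: "indicator ?P p \<noteq> (0 :: complex) \<longleftrightarrow> p \<in> ?P" for p
      by (simp add: indicator_def)
    have "{snd (pl_wt c p) | p. p \<in> ?P} = (\<lambda>s. snd (pl_wt c (slope_coordinate c s))) ` {lo, hi}"
      by blast
    also have "\<dots> = {lo, hi}"
      using slope_coordinate(2)[OF assms(1,2)] slopes by simp
    finally have "{snd (pl_wt c p) | p. indicator ?P p \<noteq> (0 :: complex)} = {lo, hi}"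
      by (simp only: support)
    moreover have "\<exists>p. indicator ?P p \<noteq> (0 :: complex)" using support by blast
    ultimately have "orbit_cone (pl_wt c) Y (indicator ?P) = slope_cone (Min {lo, hi}) (Max {lo, hi})"
      using orbit_cone_eq_slope_cone[OF Y, of "pl_wt c"] by simp
    then have "orbit_cone (pl_wt c) Y (indicator ?P) = slope_cone lo hi"
      using \<open>lo \<le> hi\<close> by simp
    then show ?thesis using 2 Y by blast
  qed
qed

lemma git_fan_pl_wt:
  assumes "2 \<le> c" "2 \<le> d" "Xbar c d \<subseteq> Y"
  shows "git_fan (pl_wt c) Y = slope_fan (-1) 1"
  unfolding git_fan_eq_chambers
  using slope_fan_subset_orbit_cones[OF assms] orbit_cone_pl_wt
  by (intro chambers_of_slope_family) auto

theorem proposition2p1: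
  fixes c d :: nat
  assumes "c \<ge> 2" and "d \<ge> 2"
  shows "git_fan (pl_wt c) (Zbar c d) = git_fan (pl_wt c) (Xbar c d) \<and>
         {C \<in> git_fan (pl_wt c) (Xbar c d).
            \<forall>D \<in> git_fan (pl_wt c) (Xbar c d). C \<subseteq> D \<longrightarrow> D = C}
         = {qcone {(1, 1), (1, 0)}, qcone {(1, 0), (1, -1)}}"
proof -
  have "Xbar c d \<subseteq> Zbar c d" by (auto simp: Xbar_def)
  then have fans: "git_fan (pl_wt c) (Zbar c d) = slope_fan (-1) 1"
    "git_fan (pl_wt c) (Xbar c d) = slope_fan (-1) 1"
    using git_fan_pl_wt[OF assms] by auto
  have "{lo :: int. -1 \<le> lo \<and> lo + 1 \<le> 1} = {-1, 0}" by auto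
  then have "{slope_cone lo (lo + 1) | lo. -1 \<le> lo \<and> lo + 1 \<le> 1} = {slope_cone (-1) 0, slope_cone 0 1}"
    unfolding setcompr_eq_image by simp
  moreover have "qcone {(1, 1), (1, 0)} = slope_cone 0 1"
    using qcone_pair_eq_slope_cone[of 0 1] by (simp add: insert_commute)
  moreover have "qcone {(1, 0), (1, -1)} = slope_cone (-1) 0"
    using qcone_pair_eq_slope_cone[of "-1" 0] by (simp add: insert_commute)
  ultimately show ?thesis
    using fans maximal_cones_slope_fan[of "-1" 1] by (simp add: insert_commute)
qed

end
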